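(* Let $f:\mathbb{R}^n\to\mathbb{R}$ be differentiable with $L_f$-Lipschitz continuous gradient, let $g:\mathbb{R}^n\to\mathbb{R}\cup\{+\infty\}$ be proper, lower semicontinuous, $\gamma_g$-prox-bounded and $\rho$-weakly convex, let $\varphi=f+g$ with $\operatorname{argmin}\varphi\neq\emptyset$. For the iterates generated by the PGCL algorithm described in the context: (i) $r^k\to0$ and $\sum_k\|r^k\|^2<\infty$, and $\omega((x^k))=\omega((\bar x^k))\subseteq\operatorname{fix}T_\gamma$; (ii) $(\varphi_\gamma(x^k))$ converges to a finite value $\varphi_\star$, and if $(x^k)$ is bounded then $(\varphi(\bar x^k))$ also converges to $\varphi_\star$.
   Context: $\omega(\cdot)$ denotes the set of limit points of a sequence; $\operatorname{fix}T_\gamma=\{x:x\in T_\gamma(x)\}$. $\gamma_g$-prox-bounded: $g+\frac1{2\gamma}\|\cdot\|^2$ bounded below for each $\gamma\in(0,\gamma_g)$; $\rho$-weakly convex: $g+\frac\rho2\|\cdot\|^2$ convex. $\operatorname{prox}_{\gamma g}(x)=\operatorname{argmin}_z\{g(z)+\frac1{2\gamma}\|z-x\|^2\}$, $T_\gamma(x)=\operatorname{prox}_{\gamma g}(x-\gamma\nabla f(x))$, $R_\gamma(x)=\gamma^{-1}(x-T_\gamma(x))$. Forward-backward envelope $\varphi_\gamma(x)=\inf_u\{f(x)+\langle\nabla f(x),u-x\rangle+g(u)+\frac1{2\gamma}\|u-x\|^2\}$. $\partial_C$: Clarke generalized Jacobian. PGCL: given $x^0$, $\gamma\in(0,\min\{1/L_f,\gamma_g\})$,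 $\sigma\in(0,\gamma\frac{1-\gamma L_f}{2})$, $\beta\in(0,1)$, $\mu\in(0,1)$; for $k=0,1,\dots$: select $\bar x^k\in T_\gamma(x^k)$, $r^k=\gamma^{-1}(x^k-\bar x^k)$; select $\bar r^k\in R_\gamma(\bar x^k)$, $Q_k\in I-\gamma\partial_C(\nabla f)(\bar x^k)$, $P_k\in\partial_C\operatorname{prox}_{\gamma g}(\bar x^k-\gamma\nabla f(\bar x^k))$; $B_k=\gamma^{-1}Q_k(I-P_kQ_k)$; stop if $\bar r^k=0$ and $\lambda_{\min}(B_k)\ge0$; select $d^k,s^k$ with $\langle Q_k\bar r^k,d^k\rangle\le0$, $\langle Q_k\bar r^k,s^k\rangle\le0$, and $\langle B_ks^k,s^k\rangle<0$ if $\lambda_{\min}(B_k)<0$, $=0$ otherwise; let $\tau_k$ be the largest element of $\{\beta^m:m\in\mathbb N\}$ such that $x^{k+1}=\bar x^k+\tau_k^2d^k+\tau_ks^k$ satisfies $\varphi_\gamma(x^{k+1})\le\varphi_\gamma(x^k)-\sigma\|r^k\|^2+\frac\mu2\tau_k^2\langle B_ks^k,s^k\rangle$. *)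

theory Defs
  imports "HOL-Analysis.Analysis"
begin

type_synonym 'n vec = "real ^ 'n"

definition lsc :: "('a::topological_space \<Rightarrow> ereal) \<Rightarrow> bool" where
  "lsc g \<longleftrightarrow> (\<forall>x. g x \<le> Liminf (at x) g)"

definition proper_fun :: "('a \<Rightarrow> ereal) \<Rightarrow> bool" where
  "proper_fun g \<longleftrightarrow> (\<forall>x. g x \<noteq> -\<infinity>) \<and> (\<exists>x. g x \<noteq> \<infinity>)"

definition prox_bounded :: "real \<Rightarrow> ('a::real_normed_vector \<Rightarrow> ereal) \<Rightarrow> bool" where
  "prox_bounded \<gamma>g g \<longleftrightarrow>
     (\<forall>\<gamma>. 0 < \<gamma> \<and> \<gamma> < \<gamma>g \<longrightarrow> (\<exists>c::real. \<forall>x. ereal c \<le> g x + ereal (norm x ^ 2 / (2 * \<gamma>))))"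

definition convex_ereal :: "('a::real_vector \<Rightarrow> ereal) \<Rightarrow> bool" where
  "convex_ereal h \<longleftrightarrow> (\<forall>x y t. 0 \<le> t \<and> t \<le> 1 \<longrightarrow>
      h ((1 - t) *\<^sub>R x + t *\<^sub>R y) \<le> ereal (1 - t) * h x + ereal t * h y)"

definition weakly_convex :: "real \<Rightarrow> ('a::real_normed_vector \<Rightarrow> ereal) \<Rightarrow> bool" where
  "weakly_convex \<rho> g \<longleftrightarrow> convex_ereal (\<lambda>x. g x + ereal (\<rho> / 2 * norm x ^ 2))"

definition prox :: "('a::real_normed_vector \<Rightarrow> ereal) \<Rightarrow> real \<Rightarrow> 'a \<Rightarrow> 'a set" where
  "prox g \<gamma> x = {z. \<forall>u. g z + ereal (norm (z - x) ^ 2 / (2 * \<gamma>)) \<le> g u + ereal (norm (u - x) ^ 2 / (2 * \<gamma>))}"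

text \<open>The proximal mapping viewed as a function (meaningful where prox is single-valued).\<close>
definition prox_fun :: "('a::real_normed_vector \<Rightarrow> ereal) \<Rightarrow> real \<Rightarrow> 'a \<Rightarrow> 'a" where
  "prox_fun g \<gamma> x = (THE z. z \<in> prox g \<gamma> x)"

definition FB :: "('a::real_inner \<Rightarrow> 'a) \<Rightarrow> ('a \<Rightarrow> ereal) \<Rightarrow> real \<Rightarrow> 'a \<Rightarrow> 'a set" where
  "FB gradf g \<gamma> x = prox g \<gamma> (x - \<gamma> *\<^sub>R gradf x)"

definition FBres :: "('a::real_inner \<Rightarrow> 'a) \<Rightarrow> ('a \<Rightarrow> ereal) \<Rightarrow> real \<Rightarrow> 'a \<Rightarrow> 'a set" where
  "FBres gradf g \<gamma> x = (\<lambda>z. (1 / \<gamma>) *\<^sub>R (x - z)) ` FB gradf g \<gamma> x"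

definition fixpts :: "('a \<Rightarrow> 'a set) \<Rightarrow> 'a set" where
  "fixpts T = {x. x \<in> T x}"

definition FBE :: "('a::real_inner \<Rightarrow> real) \<Rightarrow> ('a \<Rightarrow> 'a) \<Rightarrow> ('a \<Rightarrow> ereal) \<Rightarrow> real \<Rightarrow> 'a \<Rightarrow> ereal" where
  "FBE f gradf g \<gamma> x = (INF u. ereal (f x + gradf x \<bullet> (u - x) + norm (u - x) ^ 2 / (2 * \<gamma>)) + g u)"

definition clarke_jac :: "('n vec \<Rightarrow> 'm vec) \<Rightarrow> 'n vec \<Rightarrow> (real ^ 'n ^ 'm) set" where
  "clarke_jac F x = convex hull {A. \<exists>y. (\<forall>k. F differentiable (at (y k))) \<and> y \<longlonglongrightarrow> x \<and>
                                        (\<lambda>k. jacobian F (at (y k))) \<longlonglongrightarrow> A}"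

definition lambda_min :: "real ^ 'n ^ 'n \<Rightarrow> real" where
  "lambda_min B = Inf {e. \<exists>v. v \<noteq> 0 \<and> B *v v = e *\<^sub>R v}"

definition limit_points :: "(nat \<Rightarrow> 'a::topological_space) \<Rightarrow> 'a set" where
  "limit_points X = {a. \<exists>h. strict_mono h \<and> (X \<circ> h) \<longlonglongrightarrow> a}"

end

theory Submission
  imports Defs
begin

text \<open>
  For every \<open>xb \<in> T\<^sub>\<gamma>(x)\<close> the forward-backward envelope is finite and, by the descent lemma,
  \<open>\<phi>(xb) \<le> \<phi>\<^sub>\<gamma>(x) \<le> \<phi>(xb) + (1/(2\<gamma>) + L\<^sub>f/2) \<parallel>xb - x\<parallel>\<^sup>2\<close>.
  Since the curvature term in the line-search test is nonpositive, every accepted step decreases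
  \<open>\<phi>\<^sub>\<gamma>\<close> by at least \<open>\<sigma> \<parallel>r\<^sub>k\<parallel>\<^sup>2\<close>, while \<open>\<phi>\<^sub>\<gamma> \<ge> min \<phi>\<close> by the lower bound. Telescoping gives
  \<open>\<Sum> \<parallel>r\<^sub>k\<parallel>\<^sup>2 < \<infinity>\<close> and convergence of \<open>\<phi>\<^sub>\<gamma>(x\<^sub>k)\<close>. Hence \<open>x\<^sub>k - xb\<^sub>k = \<gamma> r\<^sub>k \<rightarrow> 0\<close>, so both
  sequences have the same limit points; these are fixed points of \<open>T\<^sub>\<gamma>\<close> because the graph of the
  proximal map of a lower semicontinuous function is closed, and the sandwich above forces
  \<open>\<phi>(xb\<^sub>k)\<close> to the same limit as \<open>\<phi>\<^sub>\<gamma>(x\<^sub>k)\<close>.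
\<close>

lemma lipschitz_gradient_taylor_bound:
  fixes f :: "'a::real_inner \<Rightarrow> real"
  assumes f_grad: "\<And>z. (f has_derivative (\<lambda>h. gradf z \<bullet> h)) (at z)"
    and grad_lip: "\<And>u v. norm (gradf u - gradf v) \<le> L * norm (u - v)"
  shows "\<bar>f y - f x - gradf x \<bullet> (y - x)\<bar> \<le> L / 2 * norm (y - x) ^ 2"
proof -
  define v where "v = y - x"
  define G where "G c t = f (x + t *\<^sub>R v) - t * (gradf x \<bullet> v) + c * t\<^sup>2 * norm v ^ 2" for c t
  have G_deriv: "(G c has_real_derivative
      (gradf (x + t *\<^sub>R v) - gradf x) \<bullet> v + c * (2 * t) * norm v ^ 2) (at t)" for c t
  proof -
    have "((\<lambda>t. x + t *\<^sub>R v) has_derivative (\<lambda>s. s *\<^sub>R v)) (at t)"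
      by (auto intro!: derivative_eq_intros)
    from diff_chain_at[OF this f_grad]
    have "((\<lambda>t. f (x + t *\<^sub>R v)) has_derivative (\<lambda>s. gradf (x + t *\<^sub>R v) \<bullet> (s *\<^sub>R v))) (at t)"
      by (simp add: o_def)
    then have "((\<lambda>t. f (x + t *\<^sub>R v)) has_real_derivative gradf (x + t *\<^sub>R v) \<bullet> v) (at t)"
      by (simp add: has_field_derivative_def mult_commute_abs)
    then show ?thesis
      unfolding G_def by (auto intro!: derivative_eq_intros simp: inner_diff_left)
  qed
  have slope: "\<bar>(gradf (x + t *\<^sub>R v) - gradf x) \<bullet> v\<bar> \<le> L * t * norm v ^ 2" if "0 \<le> t" for t
  proof -
    have "\<bar>(gradf (x + t *\<^sub>R v) - gradf x) \<bullet> v\<bar> \<le> norm (gradf (x + t *\<^sub>R v) - gradf x) * norm v"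
      by (rule Cauchy_Schwarz_ineq2)
    also have "\<dots> \<le> L * norm (t *\<^sub>R v) * norm v"
      using grad_lip[of "x + t *\<^sub>R v" x] by (simp add: mult_right_mono)
    finally show ?thesis using that by (simp add: power2_eq_square mult.assoc)
  qed
  have "G (- L / 2) 1 \<le> G (- L / 2) 0"
    by (rule DERIV_nonpos_imp_nonincreasing[of 0 1])
      (use G_deriv slope in \<open>force simp: abs_le_iff\<close>)+
  moreover have "G (L / 2) 0 \<le> G (L / 2) 1"
    by (rule DERIV_nonneg_imp_nondecreasing[of 0 1])
      (use G_deriv slope in \<open>force simp: abs_le_iff\<close>)+
  ultimately show ?thesis unfolding G_def v_def abs_le_iff by simp
qed

lemma prox_value_finite:
  assumes "proper_fun g" and "z \<in> prox g \<gamma> y"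
  shows "\<bar>g z\<bar> \<noteq> \<infinity>"
proof -
  obtain u where "g u \<noteq> \<infinity>" using assms(1) unfolding proper_fun_def by blast
  then have "g z + ereal (norm (z - y) ^ 2 / (2 * \<gamma>)) < \<infinity>"
    using assms(2) unfolding prox_def by (auto simp: less_top)
  then show ?thesis using assms(1) unfolding proper_fun_def by auto
qed

lemma quadratic_model_eq_shifted_sq:
  fixes u x w :: "'a::real_inner"
  assumes "\<gamma> > 0"
  shows "c + w \<bullet> (u - x) + norm (u - x) ^ 2 / (2 * \<gamma>)
       = c - \<gamma> / 2 * norm w ^ 2 + norm (u - (x - \<gamma> *\<^sub>R w)) ^ 2 / (2 * \<gamma>)"
  using assms
  by (simp add: power2_norm_eq_inner inner_diff_left inner_diff_right inner_commute field_simps)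
    (simp add: algebra_simps inner_commute)

lemma FBE_eq_at_FB:
  assumes "\<gamma> > 0" and xb: "xb \<in> FB gradf g \<gamma> x"
  shows "FBE f gradf g \<gamma> x = ereal (f x + gradf x \<bullet> (xb - x) + norm (xb - x) ^ 2 / (2 * \<gamma>)) + g xb"
proof -
  define y where "y = x - \<gamma> *\<^sub>R gradf x"
  define c where "c = f x - \<gamma> / 2 * norm (gradf x) ^ 2"
  \<comment> \<open>up to the constant \<open>c\<close>, the infimand is the objective of the prox at the forward step \<open>y\<close>\<close>
  have model: "ereal (f x + gradf x \<bullet> (u - x) + norm (u - x) ^ 2 / (2 * \<gamma>)) + g u
        = ereal c + (g u + ereal (norm (u - y) ^ 2 / (2 * \<gamma>)))" for u
    using quadratic_model_eq_shifted_sq[OF assms(1), of "f x" "gradf x" u x]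
    unfolding c_def y_def by (cases "g u") simp_all
  have xb_min: "g xb + ereal (norm (xb - y) ^ 2 / (2 * \<gamma>)) \<le> g u + ereal (norm (u - y) ^ 2 / (2 * \<gamma>))" for u
    using xb unfolding FB_def prox_def y_def by blast
  show ?thesis
    unfolding FBE_def
  proof (rule antisym)
    show "(INF u. ereal (f x + gradf x \<bullet> (u - x) + norm (u - x) ^ 2 / (2 * \<gamma>)) + g u)
        \<le> ereal (f x + gradf x \<bullet> (xb - x) + norm (xb - x) ^ 2 / (2 * \<gamma>)) + g xb"
      by (rule INF_lower) simp
    show "ereal (f x + gradf x \<bullet> (xb - x) + norm (xb - x) ^ 2 / (2 * \<gamma>)) + g xb
        \<le> (INF u. ereal (f x + gradf x \<bullet> (u - x) + norm (u - x) ^ 2 / (2 * \<gamma>)) + g u)"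
      unfolding model by (rule INF_greatest) (use xb_min in \<open>auto intro: add_left_mono\<close>)
  qed
qed

lemma FBE_finite:
  assumes "proper_fun g" and "\<gamma> > 0" and "xb \<in> FB gradf g \<gamma> x"
  shows "\<bar>FBE f gradf g \<gamma> x\<bar> \<noteq> \<infinity>"
  using prox_value_finite[OF assms(1) assms(3)[unfolded FB_def]]
  unfolding FBE_eq_at_FB[OF assms(2,3)] by (cases "g xb") auto

lemma FBE_objective_bounds:
  fixes f :: "'a::real_inner \<Rightarrow> real"
  assumes f_grad: "\<And>z. (f has_derivative (\<lambda>h. gradf z \<bullet> h)) (at z)"
    and grad_lip: "\<And>u v. norm (gradf u - gradf v) \<le> L * norm (u - v)"
    and "\<gamma> > 0" and "\<gamma> * L \<le> 1" and xb: "xb \<in> FB gradf g \<gamma> x"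
  shows "ereal (f xb) + g xb \<le> FBE f gradf g \<gamma> x"
    and "FBE f gradf g \<gamma> x \<le> ereal (f xb) + g xb + ereal ((1 / (2 * \<gamma>) + L / 2) * norm (xb - x) ^ 2)"
proof -
  define q where "q = f x + gradf x \<bullet> (xb - x) + norm (xb - x) ^ 2 / (2 * \<gamma>)"
  have FBE_q: "FBE f gradf g \<gamma> x = ereal q + g xb"
    unfolding q_def by (rule FBE_eq_at_FB[OF assms(3) xb])
  have taylor: "\<bar>f xb - f x - gradf x \<bullet> (xb - x)\<bar> \<le> L / 2 * norm (xb - x) ^ 2"
    by (rule lipschitz_gradient_taylor_bound[OF f_grad grad_lip])
  have "L / 2 * norm (xb - x) ^ 2 \<le> norm (xb - x) ^ 2 / (2 * \<gamma>)"
    using mult_right_mono[of "L / 2" "1 / (2 * \<gamma>)" "norm (xb - x) ^ 2"] assms(3,4)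
    by (simp add: field_simps)
  then have "f xb \<le> q" and "q \<le> f xb + (1 / (2 * \<gamma>) + L / 2) * norm (xb - x) ^ 2"
    using taylor unfolding q_def abs_le_iff by (simp_all add: algebra_simps)
  then show "ereal (f xb) + g xb \<le> FBE f gradf g \<gamma> x"
    and "FBE f gradf g \<gamma> x \<le> ereal (f xb) + g xb + ereal ((1 / (2 * \<gamma>) + L / 2) * norm (xb - x) ^ 2)"
    unfolding FBE_q by (cases "g xb"; simp)+
qed

lemma lsc_le_limit:
  fixes g :: "'a::topological_space \<Rightarrow> ereal"
  assumes "lsc g" and "z \<longlonglongrightarrow> a" and "e \<longlonglongrightarrow> E" and "\<And>j. g (z j) \<le> ereal (e j)"
  shows "g a \<le> ereal E"
proof (rule ccontr)
  assume "\<not> g a \<le> ereal E"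
  then obtain c where c: "E < c" "ereal c < g a"
    using ereal_dense2[of "ereal E" "g a"] by (auto simp: not_le)
  then have "ereal c < Liminf (at a) g"
    using assms(1) unfolding lsc_def by (blast intro: less_le_trans)
  then have "eventually (\<lambda>y. ereal c < g y) (at a)"
    by (rule less_LiminfD)
  then have "eventually (\<lambda>y. y \<noteq> a \<longrightarrow> ereal c < g y) (nhds a)"
    unfolding eventually_at_filter by simp
  then have "eventually (\<lambda>y. ereal c < g y) (nhds a)"
    using c(2) by (auto elim: eventually_mono)
  then have "eventually (\<lambda>j. ereal c < g (z j)) sequentially"
    using assms(2) by (rule eventually_compose_filterlim)
  moreover have "eventually (\<lambda>j. e j < c) sequentially"
    using assms(3) c(1) by (rule order_tendstoD)
  ultimately have "eventually (\<lambda>j. False) sequentially"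
  proof eventually_elim
    case (elim j)
    have "g (z j) < ereal c" using assms(4)[of j] elim(2) by (simp add: le_less_trans)
    with elim(1) show False by simp
  qed
  then show False by simp
qed

lemma prox_graph_closed:
  fixes g :: "'a::real_normed_vector \<Rightarrow> ereal"
  assumes "lsc g" and "\<And>x. g x \<noteq> -\<infinity>"
    and "\<And>j. z j \<in> prox g \<gamma> (y j)" and "z \<longlonglongrightarrow> a" and "y \<longlonglongrightarrow> b"
  shows "a \<in> prox g \<gamma> b"
  unfolding prox_def
proof safe
  fix u
  define q where "q v w = norm (v - w) ^ 2 / (2 * \<gamma>)" for v w :: 'a
  show "g a + ereal (norm (a - b) ^ 2 / (2 * \<gamma>)) \<le> g u + ereal (norm (u - b) ^ 2 / (2 * \<gamma>))"
  proof (cases "g u")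
    case (real G)
    have "g a \<le> ereal (G + q u b - q a b)"
    proof (rule lsc_le_limit[OF assms(1,4)])
      show "(\<lambda>j. G + q u (y j) - q (z j) (y j)) \<longlonglongrightarrow> G + q u b - q a b"
        unfolding q_def divide_inverse by (intro tendsto_intros assms(4,5))
      show "g (z j) \<le> ereal (G + q u (y j) - q (z j) (y j))" for j
      proof -
        have "g (z j) + ereal (q (z j) (y j)) \<le> g u + ereal (q u (y j))"
          using assms(3)[of j] unfolding prox_def q_def by blast
        then show ?thesis using assms(2)[of "z j"] real by (cases "g (z j)") auto
      qed
    qed
    then show ?thesis using real unfolding q_def by (cases "g a") auto
  qed (use assms(2) in auto)
qed

lemma summable_convergent_of_sufficient_decrease:
  fixes u :: "nat \<Rightarrow> ereal" and a :: "nat \<Rightarrow> real"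
  assumes nonneg: "\<And>k. 0 \<le> a k" and decrease: "\<And>k. u (Suc k) \<le> u k + ereal (- a k)"
    and u_finite: "\<And>k. \<bar>u k\<bar> \<noteq> \<infinity>" and below: "\<And>k. b \<le> u k" and "b \<noteq> -\<infinity>"
  shows "summable a" and "\<exists>l. u \<longlonglongrightarrow> ereal l"
proof -
  define v where "v k = real_of_ereal (u k)" for k
  have u_v: "u k = ereal (v k)" for k
    using u_finite[of k] unfolding v_def by (simp add: ereal_real')
  have v_decrease: "v k - v (Suc k) \<ge> a k" for k
    using decrease[of k] unfolding u_v by simp
  have "real_of_ereal b \<le> v k" for k
    using below[of k] \<open>b \<noteq> -\<infinity>\<close> unfolding u_v by (cases b) auto
  moreover have "decseq v"
    using v_decrease nonneg by (intro decseq_SucI) (meson diff_ge_0_iff_ge order_trans)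
  ultimately obtain l where "v \<longlonglongrightarrow> l"
    using decseq_convergent by blast
  then have "u \<longlonglongrightarrow> ereal l"
    unfolding u_v by (rule tendsto_ereal)
  then show "\<exists>l. u \<longlonglongrightarrow> ereal l" ..
  from \<open>v \<longlonglongrightarrow> l\<close> have "summable (\<lambda>k. v k - v (Suc k))"
    by (rule telescope_summable')
  then show "summable a"
    by (rule summable_comparison_test') (use nonneg v_decrease in auto)
qed

lemma LIMSEQ_zero_if_summable_norm_sq:
  fixes r :: "nat \<Rightarrow> 'a::real_normed_vector"
  assumes "summable (\<lambda>k. norm (r k) ^ 2)"
  shows "r \<longlonglongrightarrow> 0"
proof -
  have "(\<lambda>k. sqrt (norm (r k) ^ 2)) \<longlonglongrightarrow> sqrt 0"
    using summable_LIMSEQ_zero[OF assms] by (rule tendsto_real_sqrt)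
  then show ?thesis by (simp add: tendsto_norm_zero_iff)
qed

lemma limit_points_subset_if_diff_tendsto_zero:
  fixes x y :: "nat \<Rightarrow> 'a::real_normed_vector"
  assumes "(\<lambda>k. x k - y k) \<longlonglongrightarrow> 0"
  shows "limit_points x \<subseteq> limit_points y"
proof
  fix a assume "a \<in> limit_points x"
  then obtain h where h: "strict_mono h" "(x \<circ> h) \<longlonglongrightarrow> a" unfolding limit_points_def by blast
  have "(\<lambda>j. x (h j) - (x (h j) - y (h j))) \<longlonglongrightarrow> a - 0"
    using h(2) LIMSEQ_subseq_LIMSEQ[OF assms h(1)] by (intro tendsto_diff) (auto simp: o_def)
  then have "(y \<circ> h) \<longlonglongrightarrow> a" by (simp add: o_def)
  then show "a \<in> limit_points y" using h(1) unfolding limit_points_def by blast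
qed

lemma limit_points_eq_if_diff_tendsto_zero:
  fixes x y :: "nat \<Rightarrow> 'a::real_normed_vector"
  assumes "(\<lambda>k. x k - y k) \<longlonglongrightarrow> 0"
  shows "limit_points x = limit_points y"
proof
  show "limit_points x \<subseteq> limit_points y"
    using assms by (rule limit_points_subset_if_diff_tendsto_zero)
  have "(\<lambda>k. y k - x k) \<longlonglongrightarrow> 0"
    using tendsto_minus[OF assms] by simp
  then show "limit_points y \<subseteq> limit_points x"
    by (rule limit_points_subset_if_diff_tendsto_zero)
qed

lemma limit_points_FB_subset_fixpts:
  assumes "lsc g" and "\<And>x. g x \<noteq> -\<infinity>" and "continuous_on UNIV gradf"
    and xb: "\<And>k. xb k \<in> FB gradf g \<gamma> (x k)" and "(\<lambda>k. x k - xb k) \<longlonglongrightarrow> 0"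
  shows "limit_points xb \<subseteq> fixpts (FB gradf g \<gamma>)"
proof
  fix a assume "a \<in> limit_points xb"
  then obtain h where h: "strict_mono h" "(xb \<circ> h) \<longlonglongrightarrow> a" unfolding limit_points_def by blast
  have "(\<lambda>j. xb (h j) + (x (h j) - xb (h j))) \<longlonglongrightarrow> a + 0"
    using h(2) LIMSEQ_subseq_LIMSEQ[OF assms(5) h(1)] by (intro tendsto_add) (auto simp: o_def)
  then have x_h: "(\<lambda>j. x (h j)) \<longlonglongrightarrow> a" by simp
  have "(\<lambda>j. gradf (x (h j))) \<longlonglongrightarrow> gradf a"
    using assms(3) x_h by (auto intro: isCont_tendsto_compose simp: continuous_on_eq_continuous_at)
  then have y_h: "(\<lambda>j. x (h j) - \<gamma> *\<^sub>R gradf (x (h j))) \<longlonglongrightarrow> a - \<gamma> *\<^sub>R gradf a"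
    using x_h by (intro tendsto_intros)
  have "a \<in> prox g \<gamma> (a - \<gamma> *\<^sub>R gradf a)"
    by (rule prox_graph_closed[OF assms(1,2) _ h(2) y_h]) (use xb in \<open>simp add: FB_def\<close>)
  then show "a \<in> fixpts (FB gradf g \<gamma>)" unfolding fixpts_def FB_def by simp
qed

lemma FB_objective_tendsto:
  fixes f :: "'a::real_inner \<Rightarrow> real"
  assumes f_grad: "\<And>z. (f has_derivative (\<lambda>h. gradf z \<bullet> h)) (at z)"
    and grad_lip: "\<And>u v. norm (gradf u - gradf v) \<le> L * norm (u - v)"
    and "\<gamma> > 0" and "\<gamma> * L \<le> 1" and xb: "\<And>k. xb k \<in> FB gradf g \<gamma> (x k)"
    and "(\<lambda>k. x k - xb k) \<longlonglongrightarrow> 0" and FBE_lim: "(\<lambda>k. FBE f gradf g \<gamma> (x k)) \<longlonglongrightarrow> ereal l"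
  shows "(\<lambda>k. ereal (f (xb k)) + g (xb k)) \<longlonglongrightarrow> ereal l"
proof (rule tendsto_sandwich)
  define c where "c = 1 / (2 * \<gamma>) + L / 2"
  note bounds = FBE_objective_bounds[OF f_grad grad_lip assms(3,4) xb]
  show "\<forall>\<^sub>F k in sequentially. ereal (f (xb k)) + g (xb k) \<le> FBE f gradf g \<gamma> (x k)"
    using bounds(1) by simp
  show "\<forall>\<^sub>F k in sequentially. FBE f gradf g \<gamma> (x k) - ereal (c * norm (xb k - x k) ^ 2)
      \<le> ereal (f (xb k)) + g (xb k)"
    using bounds(2) unfolding c_def by (simp add: ereal_minus_le)
  have "(\<lambda>k. norm (xb k - x k)) \<longlonglongrightarrow> 0"
    using assms(6) by (simp add: tendsto_norm_zero_iff norm_minus_commute)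
  then have "(\<lambda>k. ereal (c * norm (xb k - x k) ^ 2)) \<longlonglongrightarrow> ereal (c * 0 ^ 2)"
    by (intro tendsto_intros)
  from tendsto_diff_ereal[OF _ _ FBE_lim this]
  show "(\<lambda>k. FBE f gradf g \<gamma> (x k) - ereal (c * norm (xb k - x k) ^ 2)) \<longlonglongrightarrow> ereal l"
    by simp
qed (rule FBE_lim)

theorem proposition5p2:
  fixes f :: "real ^ 'n \<Rightarrow> real" and gradf :: "real ^ 'n \<Rightarrow> real ^ 'n"
    and g :: "real ^ 'n \<Rightarrow> ereal"
    and Lf \<gamma>g \<rho> \<gamma> \<sigma> \<beta> \<mu> :: real
    and x xb r rb d s :: "nat \<Rightarrow> real ^ 'n"
    and Q P :: "nat \<Rightarrow> real ^ 'n ^ 'n"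
    and m :: "nat \<Rightarrow> nat"
  assumes f_grad: "\<And>z. (f has_derivative (\<lambda>h. gradf z \<bullet> h)) (at z)"
    and Lf_nonneg: "0 \<le> Lf"
    and grad_lip: "\<And>u v. norm (gradf u - gradf v) \<le> Lf * norm (u - v)"
    and g_proper: "proper_fun g" and g_lsc: "lsc g"
    and \<gamma>g_pos: "0 < \<gamma>g" and g_pb: "prox_bounded \<gamma>g g"
    and \<rho>_nonneg: "0 \<le> \<rho>" and g_wc: "weakly_convex \<rho> g"
    and argmin_ne: "\<exists>z. \<forall>u. ereal (f z) + g z \<le> ereal (f u) + g u"
    and \<gamma>_pos: "0 < \<gamma>" and \<gamma>_lt_\<gamma>g: "\<gamma> < \<gamma>g" and \<gamma>_Lf: "\<gamma> * Lf < 1"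
    and \<sigma>_pos: "0 < \<sigma>" and \<sigma>_lt: "\<sigma> < \<gamma> * (1 - \<gamma> * Lf) / 2"
    and \<beta>: "0 < \<beta>" "\<beta> < 1" and \<mu>: "0 < \<mu>" "\<mu> < 1"
    and xb_sel: "\<And>k. xb k \<in> FB gradf g \<gamma> (x k)"
    and r_def: "\<And>k. r k = (1 / \<gamma>) *\<^sub>R (x k - xb k)"
    and rb_sel: "\<And>k. rb k \<in> FBres gradf g \<gamma> (xb k)"
    and Q_sel: "\<And>k. Q k \<in> (\<lambda>J. mat 1 - \<gamma> *\<^sub>R J) ` clarke_jac gradf (xb k)"
    and P_sel: "\<And>k. P k \<in> clarke_jac (prox_fun g \<gamma>) (xb k - \<gamma> *\<^sub>R gradf (xb k))"
    and no_stop: "\<And>k. \<not> (rb k = 0 \<and>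
                     lambda_min ((1 / \<gamma>) *\<^sub>R (Q k ** (mat 1 - P k ** Q k))) \<ge> 0)"
    and d_dir: "\<And>k. (Q k *v rb k) \<bullet> d k \<le> 0"
    and s_dir: "\<And>k. (Q k *v rb k) \<bullet> s k \<le> 0"
    and s_curv: "\<And>k. let B = (1 / \<gamma>) *\<^sub>R (Q k ** (mat 1 - P k ** Q k)) in
                   (if lambda_min B < 0 then (B *v s k) \<bullet> s k < 0 else (B *v s k) \<bullet> s k = 0)"
    and x_next: "\<And>k. x (Suc k) = xb k + (\<beta> ^ m k) ^ 2 *\<^sub>R d k + \<beta> ^ m k *\<^sub>R s k"
    and ls_accept: "\<And>k. let B = (1 / \<gamma>) *\<^sub>R (Q k ** (mat 1 - P k ** Q k)) in
                   FBE f gradf g \<gamma> (x (Suc k)) \<le> FBE f gradf g \<gamma> (x k)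
                     + ereal (- \<sigma> * norm (r k) ^ 2 + \<mu> / 2 * (\<beta> ^ m k) ^ 2 * ((B *v s k) \<bullet> s k))"
    and ls_largest: "\<And>k j. j < m k \<Longrightarrow> (let B = (1 / \<gamma>) *\<^sub>R (Q k ** (mat 1 - P k ** Q k)) in
                   \<not> (FBE f gradf g \<gamma> (xb k + (\<beta> ^ j) ^ 2 *\<^sub>R d k + \<beta> ^ j *\<^sub>R s k) \<le> FBE f gradf g \<gamma> (x k)
                     + ereal (- \<sigma> * norm (r k) ^ 2 + \<mu> / 2 * (\<beta> ^ j) ^ 2 * ((B *v s k) \<bullet> s k))))"
  shows "r \<longlonglongrightarrow> 0 \<and> summable (\<lambda>k. norm (r k) ^ 2)
         \<and> limit_points x = limit_points xb
         \<and> limit_points xb \<subseteq> fixpts (FB gradf g \<gamma>)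
         \<and> (\<exists>\<phi>s::real. (\<lambda>k. FBE f gradf g \<gamma> (x k)) \<longlonglongrightarrow> ereal \<phi>s
              \<and> (bounded (range x) \<longrightarrow> (\<lambda>k. ereal (f (xb k)) + g (xb k)) \<longlonglongrightarrow> ereal \<phi>s))"
proof -
  have g_nm: "\<And>u. g u \<noteq> -\<infinity>" using g_proper unfolding proper_fun_def by blast
  have \<gamma>_Lf_le: "\<gamma> * Lf \<le> 1" using \<gamma>_Lf by simp
  have grad_cont: "continuous_on UNIV gradf"
    by (rule lipschitz_on_continuous_on[of Lf])
      (auto intro!: lipschitz_onI simp: dist_norm grad_lip Lf_nonneg)
  have decrease: "FBE f gradf g \<gamma> (x (Suc k)) \<le> FBE f gradf g \<gamma> (x k) + ereal (- (\<sigma> * norm (r k) ^ 2))"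
    for k
  proof -
    let ?B = "(1 / \<gamma>) *\<^sub>R (Q k ** (mat 1 - P k ** Q k))"
    have "(?B *v s k) \<bullet> s k \<le> 0"
      using s_curv[of k] unfolding Let_def by (auto split: if_splits)
    then have "\<mu> / 2 * (\<beta> ^ m k) ^ 2 * ((?B *v s k) \<bullet> s k) \<le> 0"
      using \<mu> by (simp add: mult_nonneg_nonpos)
    then show ?thesis
      using ls_accept[of k] unfolding Let_def by (auto elim!: order_trans intro!: add_left_mono)
  qed
  obtain z where z: "\<And>u. ereal (f z) + g z \<le> ereal (f u) + g u" using argmin_ne by blast
  have bounded_below: "ereal (f z) + g z \<le> FBE f gradf g \<gamma> (x k)" for k
    using z FBE_objective_bounds(1)[OF f_grad grad_lip \<gamma>_pos \<gamma>_Lf_le xb_sel] by (rule order_trans)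
  have nonneg: "0 \<le> \<sigma> * norm (r k) ^ 2" for k using \<sigma>_pos by simp
  note descent = summable_convergent_of_sufficient_decrease
    [of "\<lambda>k. \<sigma> * norm (r k) ^ 2" "\<lambda>k. FBE f gradf g \<gamma> (x k)",
     OF nonneg decrease FBE_finite[OF g_proper \<gamma>_pos xb_sel] bounded_below]
  have summable: "summable (\<lambda>k. norm (r k) ^ 2)" using descent(1) g_nm \<sigma>_pos by simp
  obtain \<phi>s where FBE_lim: "(\<lambda>k. FBE f gradf g \<gamma> (x k)) \<longlonglongrightarrow> ereal \<phi>s"
    using descent(2) g_nm by auto
  have r_lim: "r \<longlonglongrightarrow> 0" using summable by (rule LIMSEQ_zero_if_summable_norm_sq)
  have "x k - xb k = \<gamma> *\<^sub>R r k" for k using r_def[of k] \<gamma>_pos by simp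
  then have x_xb: "(\<lambda>k. x k - xb k) \<longlonglongrightarrow> 0"
    using tendsto_scaleR[OF tendsto_const r_lim, of \<gamma>] by simp
  show ?thesis
    using r_lim summable limit_points_eq_if_diff_tendsto_zero[OF x_xb]
      limit_points_FB_subset_fixpts[OF g_lsc g_nm grad_cont xb_sel x_xb] FBE_lim
      FB_objective_tendsto[OF f_grad grad_lip \<gamma>_pos \<gamma>_Lf_le xb_sel x_xb FBE_lim]
    by blast
qed

end
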